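(* In any correlational scenario, every deterministic correlation whose signalling graph is not a siblings-on-cycles graph is antinomic, i.e. it is not deterministically consistent.
   Context: Parties $S_1,\dots,S_N$ with finite setting sets $A_k$ and outcome sets $X_k$; a deterministic correlation is $p(\vec x|\vec a)=\delta_{\vec x,f(\vec a)}$ with $f_k:\vec A\to X_k$. Its signalling graph is the directed graph on vertex set $[N]$ with an edge $k\to l$ ($k\ne l$) iff there exist $\vec a,\vec a'$ differing only in the $k$-th entry with $f_l(\vec a)\neq f_l(\vec a')$. A directed graph is a siblings-on-cycles graph if every directed cycle $v_1\to v_2\to\dots\to v_c\to v_1$ ($c\ge2$, distinct vertices) contains two distinct vertices $v_{s_1},v_{s_2}$ having a common parent $v_p$ (edges $v_p\to v_{s_1}$ and $v_p\to v_{s_2}$). Classical processes: for finite sets $I_k,O_k$, a conditional distribution $p(\vec i|\vec o)$ is a classical process if for all finite $A_k,X_k$ and all local interventions $p(x_k,o_k|a_k,i_k)$, $\sum_{\vec i,\vec o}\prod_k p(x_k,o_k|a_k,i_k)p(\vec i|\vec o)$ is a valid conditional distribution of $\vec x$ given $\vec a$. A process function is $\omega:\vec O\to\vec I$ such that $\delta_{\vec i,\omega(\vec o)}$ is a classical process. The deterministic-extrema polytope is the convex hull of $\{\delta_{\vec i,\omega(\vec o)}:\omega\text{ a process function}\}$. A correlation is deterministically consistent if $p(\vec x|\vec a)=\sum_{\vec i,\vec o}\prod_k p(x_k,o_k|a_k,i_k)\,p(\vec i|\vec o)$ for some finite $I_k,O_k$, local interventions $p(x_k,o_k|a_k,i_k)$,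 and $p(\vec i|\vec o)$ in the deterministic-extrema polytope; otherwise it is antinomic. *)

theory Defs
  imports Complex_Main "HOL-Library.FuncSet"
begin

text \<open>Parties are indexed by {..<N}. Joint settings/outcomes are extensional
 functions in PiE {..<N} S. Process input/output spaces I_k, O_k are finite
 sets of naturals (any finite set embeds in nat).\<close>

text \<open>A local intervention family Q k x ov a i = p(x_k,o_k | a_k,i_k) for party k.\<close>
definition local_interventions ::
  "nat \<Rightarrow> (nat \<Rightarrow> 'a set) \<Rightarrow> (nat \<Rightarrow> 'x set) \<Rightarrow> (nat \<Rightarrow> nat set) \<Rightarrow> (nat \<Rightarrow> nat set)
   \<Rightarrow> (nat \<Rightarrow> 'x \<Rightarrow> nat \<Rightarrow> 'a \<Rightarrow> nat \<Rightarrow> real) \<Rightarrow> bool" where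
  "local_interventions N A X In Out Q \<longleftrightarrow>
     (\<forall>k<N. \<forall>a\<in>A k. \<forall>i\<in>In k.
        (\<forall>x\<in>X k. \<forall>ov\<in>Out k. 0 \<le> Q k x ov a i) \<and>
        (\<Sum>x\<in>X k. \<Sum>ov\<in>Out k. Q k x ov a i) = 1)"

definition compose ::
  "nat \<Rightarrow> (nat \<Rightarrow> nat set) \<Rightarrow> (nat \<Rightarrow> nat set) \<Rightarrow> (nat \<Rightarrow> 'x \<Rightarrow> nat \<Rightarrow> 'a \<Rightarrow> nat \<Rightarrow> real)
   \<Rightarrow> ((nat \<Rightarrow> nat) \<Rightarrow> (nat \<Rightarrow> nat) \<Rightarrow> real) \<Rightarrow> (nat \<Rightarrow> 'x) \<Rightarrow> (nat \<Rightarrow> 'a) \<Rightarrow> real" where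
  "compose N In Out Q w x a =
     (\<Sum>i\<in>PiE {..<N} In. \<Sum>ov\<in>PiE {..<N} Out.
        (\<Prod>k<N. Q k (x k) (ov k) (a k) (i k)) * w i ov)"

definition cond_distr ::
  "nat \<Rightarrow> (nat \<Rightarrow> 'a set) \<Rightarrow> (nat \<Rightarrow> 'x set) \<Rightarrow> ((nat \<Rightarrow> 'x) \<Rightarrow> (nat \<Rightarrow> 'a) \<Rightarrow> real) \<Rightarrow> bool" where
  "cond_distr N A X r \<longleftrightarrow>
     (\<forall>a\<in>PiE {..<N} A. (\<forall>x\<in>PiE {..<N} X. 0 \<le> r x a) \<and> (\<Sum>x\<in>PiE {..<N} X. r x a) = 1)"

definition classical_process ::
  "nat \<Rightarrow> (nat \<Rightarrow> nat set) \<Rightarrow> (nat \<Rightarrow> nat set) \<Rightarrow> ((nat \<Rightarrow> nat) \<Rightarrow> (nat \<Rightarrow> nat) \<Rightarrow> real) \<Rightarrow> bool" where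
  "classical_process N In Out w \<longleftrightarrow>
     cond_distr N Out In w \<and>
     (\<forall>(A :: nat \<Rightarrow> nat set) (X :: nat \<Rightarrow> nat set)
        (Q :: nat \<Rightarrow> nat \<Rightarrow> nat \<Rightarrow> nat \<Rightarrow> nat \<Rightarrow> real).
        (\<forall>k<N. finite (A k) \<and> finite (X k)) \<longrightarrow> local_interventions N A X In Out Q \<longrightarrow>
        cond_distr N A X (compose N In Out Q w))"

definition delta_fun :: "((nat \<Rightarrow> nat) \<Rightarrow> (nat \<Rightarrow> nat)) \<Rightarrow> (nat \<Rightarrow> nat) \<Rightarrow> (nat \<Rightarrow> nat) \<Rightarrow> real" where
  "delta_fun \<omega> i ov = (if i = \<omega> ov then 1 else 0)"

definition process_function ::
  "nat \<Rightarrow> (nat \<Rightarrow> nat set) \<Rightarrow> (nat \<Rightarrow> nat set) \<Rightarrow> ((nat \<Rightarrow> nat) \<Rightarrow> (nat \<Rightarrow> nat)) \<Rightarrow> bool" where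
  "process_function N In Out \<omega> \<longleftrightarrow>
     \<omega> \<in> PiE {..<N} Out \<rightarrow> PiE {..<N} In \<and> classical_process N In Out (delta_fun \<omega>)"

definition det_extrema_polytope ::
  "nat \<Rightarrow> (nat \<Rightarrow> nat set) \<Rightarrow> (nat \<Rightarrow> nat set) \<Rightarrow> ((nat \<Rightarrow> nat) \<Rightarrow> (nat \<Rightarrow> nat) \<Rightarrow> real) \<Rightarrow> bool" where
  "det_extrema_polytope N In Out w \<longleftrightarrow>
     (\<exists>(n::nat) (c :: nat \<Rightarrow> real) (\<Omega> :: nat \<Rightarrow> (nat \<Rightarrow> nat) \<Rightarrow> (nat \<Rightarrow> nat)).
        (\<forall>j<n. 0 \<le> c j \<and> process_function N In Out (\<Omega> j)) \<and> (\<Sum>j<n. c j) = 1 \<and>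
        (\<forall>i\<in>PiE {..<N} In. \<forall>ov\<in>PiE {..<N} Out. w i ov = (\<Sum>j<n. c j * delta_fun (\<Omega> j) i ov)))"

definition det_consistent ::
  "nat \<Rightarrow> (nat \<Rightarrow> 'a set) \<Rightarrow> (nat \<Rightarrow> 'x set) \<Rightarrow> ((nat \<Rightarrow> 'x) \<Rightarrow> (nat \<Rightarrow> 'a) \<Rightarrow> real) \<Rightarrow> bool" where
  "det_consistent N A X p \<longleftrightarrow>
     (\<exists>(In :: nat \<Rightarrow> nat set) (Out :: nat \<Rightarrow> nat set) Q w.
        (\<forall>k<N. finite (In k) \<and> finite (Out k)) \<and>
        local_interventions N A X In Out Q \<and>
        det_extrema_polytope N In Out w \<and>
        (\<forall>a\<in>PiE {..<N} A. \<forall>x\<in>PiE {..<N} X. p x a = compose N In Out Q w x a))"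

definition antinomic ::
  "nat \<Rightarrow> (nat \<Rightarrow> 'a set) \<Rightarrow> (nat \<Rightarrow> 'x set) \<Rightarrow> ((nat \<Rightarrow> 'x) \<Rightarrow> (nat \<Rightarrow> 'a) \<Rightarrow> real) \<Rightarrow> bool" where
  "antinomic N A X p \<longleftrightarrow> \<not> det_consistent N A X p"

definition det_corr :: "nat \<Rightarrow> (nat \<Rightarrow> (nat \<Rightarrow> 'a) \<Rightarrow> 'x) \<Rightarrow> (nat \<Rightarrow> 'x) \<Rightarrow> (nat \<Rightarrow> 'a) \<Rightarrow> real" where
  "det_corr N f x a = (if (\<forall>k<N. x k = f k a) then 1 else 0)"

definition signals :: "nat \<Rightarrow> (nat \<Rightarrow> 'a set) \<Rightarrow> (nat \<Rightarrow> (nat \<Rightarrow> 'a) \<Rightarrow> 'x) \<Rightarrow> nat \<Rightarrow> nat \<Rightarrow> bool" where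
  "signals N A f k l \<longleftrightarrow> k < N \<and> l < N \<and> k \<noteq> l \<and>
     (\<exists>a\<in>PiE {..<N} A. \<exists>a'\<in>PiE {..<N} A. (\<forall>j. j \<noteq> k \<longrightarrow> a j = a' j) \<and> f l a \<noteq> f l a')"

definition directed_cycle :: "nat \<Rightarrow> (nat \<Rightarrow> nat \<Rightarrow> bool) \<Rightarrow> nat list \<Rightarrow> bool" where
  "directed_cycle N E vs \<longleftrightarrow> length vs \<ge> 2 \<and> distinct vs \<and> set vs \<subseteq> {..<N} \<and>
     (\<forall>j. Suc j < length vs \<longrightarrow> E (vs ! j) (vs ! Suc j)) \<and> E (last vs) (hd vs)"

definition siblings_on_cycles :: "nat \<Rightarrow> (nat \<Rightarrow> nat \<Rightarrow> bool) \<Rightarrow> bool" where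
  "siblings_on_cycles N E \<longleftrightarrow>
     (\<forall>vs. directed_cycle N E vs \<longrightarrow>
        (\<exists>s1\<in>set vs. \<exists>s2\<in>set vs. s1 \<noteq> s2 \<and> (\<exists>v<N. E v s1 \<and> E v s2)))"

end

theory Submission
  imports Defs
begin

text \<open>Suppose the deterministic correlation f were deterministically consistent. Deterministic
  correlations are extreme, so a single process function \<omega> together with deterministic local
  strategies already reproduces f. A process function admits exactly one consistent joint output
  for every choice of local output maps; in particular no party can influence its own input, and
  hence the input of party l reveals its whole response function, i.e. how f l would react to each
  of its own settings with all other settings fixed. Parties may therefore choose their settings
  as functions of their response functions, and consistent settings still exist. On a directed
  cycle of the signalling graph without siblings, the response of each cycle vertex depends,
  among the cycle vertices, only on its predecessor. Letting every vertex copy the choice of its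
  predecessor, except one vertex that negates it, yields a grandfather paradox.\<close>

section \<open>Process functions\<close>

locale unique_fixpoint_map =
  fixes N :: nat and In Out :: "nat \<Rightarrow> nat set" and \<omega> :: "(nat \<Rightarrow> nat) \<Rightarrow> nat \<Rightarrow> nat"
  assumes \<omega>_maps: "\<omega> \<in> PiE {..<N} Out \<rightarrow> PiE {..<N} In"
    and unique_fixpoint: "\<And>h. (\<forall>k<N. \<forall>i\<in>In k. h k i \<in> Out k) \<Longrightarrow>
        \<exists>!z. z \<in> PiE {..<N} Out \<and> (\<forall>k<N. z k = h k (\<omega> z k))"
begin

definition fixpoint :: "(nat \<Rightarrow> nat \<Rightarrow> nat) \<Rightarrow> (nat \<Rightarrow> nat) \<Rightarrow> bool" where
  "fixpoint h z \<longleftrightarrow> z \<in> PiE {..<N} Out \<and> (\<forall>k<N. z k = h k (\<omega> z k))"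

definition strategy :: "(nat \<Rightarrow> nat \<Rightarrow> nat) \<Rightarrow> bool" where
  "strategy h \<longleftrightarrow> (\<forall>k<N. \<forall>i\<in>In k. h k i \<in> Out k)"

lemma fixpoint_exists: "strategy h \<Longrightarrow> \<exists>z. fixpoint h z"
  using unique_fixpoint[of h] unfolding fixpoint_def strategy_def by blast

lemma fixpoint_unique: "strategy h \<Longrightarrow> fixpoint h z \<Longrightarrow> fixpoint h z' \<Longrightarrow> z = z'"
  using unique_fixpoint[of h] unfolding fixpoint_def strategy_def by blast

lemma \<omega>_in_In: "z \<in> PiE {..<N} Out \<Longrightarrow> k < N \<Longrightarrow> \<omega> z k \<in> In k"
  using \<omega>_maps by (auto simp: PiE_def Pi_def)

lemma fixpoint_in_Out: "fixpoint h z \<Longrightarrow> k < N \<Longrightarrow> z k \<in> Out k"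
  unfolding fixpoint_def by (metis PiE_mem lessThan_iff)

text \<open>A party cannot influence its own input: if its input did depend on its output
  function, it could output the value that leads to a different input, and the resulting
  loop would have no fixed point.\<close>
lemma input_independent_of_own_strategy:
  assumes l: "l < N" and h: "strategy h" and h': "strategy h'"
    and agree: "\<And>k. k < N \<Longrightarrow> k \<noteq> l \<Longrightarrow> h k = h' k"
    and z: "fixpoint h z" and z': "fixpoint h' z'"
  shows "\<omega> z l = \<omega> z' l"
proof -
  define H where "H u = h(l := (\<lambda>_. u))" for u
  have H: "strategy (H u)" if "u \<in> Out l" for u
    using that h unfolding strategy_def H_def by auto
  define F where "F u = (THE z. fixpoint (H u) z)" for u
  have F: "fixpoint (H u) (F u)" if u: "u \<in> Out l" for u
    unfolding F_def using fixpoint_exists[OF H[OF u]] fixpoint_unique[OF H[OF u]]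
    by (metis theI)
  have F_eq: "z = F (z l)" if g: "fixpoint g z" and "\<And>k. k < N \<Longrightarrow> k \<noteq> l \<Longrightarrow> g k = h k" for g z
  proof -
    have "fixpoint (H (z l)) z" using g that(2) l unfolding fixpoint_def H_def by auto
    then show ?thesis using fixpoint_unique H F fixpoint_in_Out[OF g l] by blast
  qed
  define J where "J u = \<omega> (F u) l" for u
  have J_const: "J u1 = J u2" if u1: "u1 \<in> Out l" and u2: "u2 \<in> Out l" for u1 u2
  proof (rule ccontr)
    assume ne: "J u1 \<noteq> J u2"
    define g where "g = h(l := (\<lambda>i. if i = J u1 then u2 else u1))"
    have "strategy g" using h u1 u2 unfolding strategy_def g_def by auto
    then obtain y where y: "fixpoint g y" using fixpoint_exists by blast
    have "y = F (y l)" by (rule F_eq[OF y]) (simp add: g_def)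
    then have "\<omega> y l = J (y l)" unfolding J_def by (rule arg_cong)
    moreover have "y l = g l (\<omega> y l)" using y l unfolding fixpoint_def by blast
    ultimately have "y l = (if J (y l) = J u1 then u2 else u1)" by (simp add: g_def)
    then show False using ne by (auto split: if_splits)
  qed
  have "\<omega> z l = J (z l)" using F_eq[OF z] unfolding J_def by simp
  also have "\<dots> = J (z' l)" using J_const fixpoint_in_Out[OF z l] fixpoint_in_Out[OF z' l] by blast
  also have "\<dots> = \<omega> z' l" using F_eq[OF z'] agree unfolding J_def by simp
  finally show ?thesis .
qed

end

lemma compose_delta_fun:
  assumes \<omega>: "\<omega> \<in> PiE {..<N} Out \<rightarrow> PiE {..<N} In" and In: "\<forall>k<N. finite (In k)"
  shows "compose N In Out Q (delta_fun \<omega>) x a =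
     (\<Sum>ov\<in>PiE {..<N} Out. \<Prod>k<N. Q k (x k) (ov k) (a k) (\<omega> ov k))"
proof -
  have fin: "finite (PiE {..<N} In)" using In by (intro finite_PiE) auto
  have "compose N In Out Q (delta_fun \<omega>) x a = (\<Sum>ov\<in>PiE {..<N} Out. \<Sum>i\<in>PiE {..<N} In.
      if i = \<omega> ov then \<Prod>k<N. Q k (x k) (ov k) (a k) (i k) else 0)"
    unfolding compose_def delta_fun_def by (subst sum.swap) (simp add: if_distrib cong: if_cong)
  also have "\<dots> = (\<Sum>ov\<in>PiE {..<N} Out. \<Prod>k<N. Q k (x k) (ov k) (a k) (\<omega> ov k))"
    using \<omega> fin by (intro sum.cong refl) (auto simp: sum.delta')
  finally show ?thesis .
qed

lemma process_function_prod_sum_eq_1: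
  fixes R :: "nat \<Rightarrow> nat \<Rightarrow> nat \<Rightarrow> real"
  assumes pf: "process_function N In Out \<omega>" and In: "\<forall>k<N. finite (In k)"
    and R: "\<forall>k<N. \<forall>i\<in>In k. (\<forall>ov\<in>Out k. 0 \<le> R k ov i) \<and> (\<Sum>ov\<in>Out k. R k ov i) = 1"
  shows "(\<Sum>ov\<in>PiE {..<N} Out. \<Prod>k<N. R k (ov k) (\<omega> ov k)) = 1"
proof -
  have \<omega>: "\<omega> \<in> PiE {..<N} Out \<rightarrow> PiE {..<N} In"
    and cp: "classical_process N In Out (delta_fun \<omega>)"
    using pf unfolding process_function_def by auto
  text \<open>Test the process with a single setting and a single outcome per party.\<close>
  define Q :: "nat \<Rightarrow> nat \<Rightarrow> nat \<Rightarrow> nat \<Rightarrow> nat \<Rightarrow> real" where "Q k x ov a i = R k ov i" for k x ov a i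
  define one :: "nat \<Rightarrow> nat set" where "one k = {0}" for k
  have "local_interventions N one one In Out Q"
    unfolding local_interventions_def Q_def one_def using R by simp
  then have "cond_distr N one one (compose N In Out Q (delta_fun \<omega>))"
    using cp unfolding classical_process_def one_def by simp
  moreover have "restrict (\<lambda>k. 0) {..<N} \<in> PiE {..<N} one" unfolding one_def by simp
  ultimately have "(\<Sum>x\<in>PiE {..<N} one. compose N In Out Q (delta_fun \<omega>) x (restrict (\<lambda>k. 0) {..<N})) = 1"
    unfolding cond_distr_def by blast
  moreover have "card (PiE {..<N} one) = 1" unfolding one_def by (simp add: card_PiE)
  ultimately show ?thesis unfolding compose_delta_fun[OF \<omega> In] Q_def by simp
qed

lemma prod_indicator: "(\<Prod>k<(n::nat). if P k then 1 else (0::real)) = (if \<forall>k<n. P k then 1 else 0)"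
  by (induction n) (simp_all add: less_Suc_eq)

lemma process_function_unique_fixpoint_map:
  assumes pf: "process_function N In Out \<omega>" and In: "\<forall>k<N. finite (In k)"
    and Out: "\<forall>k<N. finite (Out k)"
  shows "unique_fixpoint_map N In Out \<omega>"
proof
  show "\<omega> \<in> PiE {..<N} Out \<rightarrow> PiE {..<N} In" using pf unfolding process_function_def by blast
next
  fix h assume h: "\<forall>k<N. \<forall>i\<in>In k. h k i \<in> Out k"
  let ?S = "{z \<in> PiE {..<N} Out. \<forall>k<N. z k = h k (\<omega> z k)}"
  text \<open>Composing with the deterministic local maps h counts the fixed points.\<close>
  have "(\<Sum>ov\<in>PiE {..<N} Out. \<Prod>k<N. if ov k = h k (\<omega> ov k) then 1 else (0::real)) = 1"
    using h Out by (intro process_function_prod_sum_eq_1[OF pf In]) auto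
  moreover have "finite (PiE {..<N} Out)" using Out by (intro finite_PiE) auto
  ultimately have "card ?S = 1" by (simp add: prod_indicator sum.inter_filter[symmetric])
  then obtain z where S: "?S = {z}" by (rule card_1_singletonE)
  show "\<exists>!z. z \<in> PiE {..<N} Out \<and> (\<forall>k<N. z k = h k (\<omega> z k))"
  proof (rule ex1I)
    show "z \<in> PiE {..<N} Out \<and> (\<forall>k<N. z k = h k (\<omega> z k))" using S by blast
  next
    fix y assume "y \<in> PiE {..<N} Out \<and> (\<forall>k<N. y k = h k (\<omega> y k))"
    then have "y \<in> ?S" by blast
    then show "y = z" using S by blast
  qed
qed

lemma compose_convex_combination:
  fixes n :: nat
  assumes w: "\<forall>i\<in>PiE {..<N} In. \<forall>ov\<in>PiE {..<N} Out. w i ov = (\<Sum>j<n. c j * delta_fun (\<Omega> j) i ov)"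
  shows "compose N In Out Q w x a = (\<Sum>j<n. c j * compose N In Out Q (delta_fun (\<Omega> j)) x a)"
proof -
  let ?q = "\<lambda>i ov. \<Prod>k<N. Q k (x k) (ov k) (a k) (i k)"
  have "compose N In Out Q w x a =
      (\<Sum>i\<in>PiE {..<N} In. \<Sum>ov\<in>PiE {..<N} Out. \<Sum>j<n. c j * (?q i ov * delta_fun (\<Omega> j) i ov))"
    unfolding compose_def using w by (intro sum.cong refl) (simp add: sum_distrib_left mult.left_commute)
  also have "\<dots> = (\<Sum>j<n. \<Sum>i\<in>PiE {..<N} In. \<Sum>ov\<in>PiE {..<N} Out. c j * (?q i ov * delta_fun (\<Omega> j) i ov))"
    by (subst sum.swap) (intro sum.cong refl, rule sum.swap)
  also have "\<dots> = (\<Sum>j<n. c j * compose N In Out Q (delta_fun (\<Omega> j)) x a)"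
    unfolding compose_def by (simp add: sum_distrib_left)
  finally show ?thesis .
qed

lemma local_interventions_factor_nonneg:
  assumes Q: "local_interventions N A X In Out Q" and \<omega>: "\<omega> \<in> PiE {..<N} Out \<rightarrow> PiE {..<N} In"
    and "a \<in> PiE {..<N} A" "x \<in> PiE {..<N} X" "ov \<in> PiE {..<N} Out" "k < N"
  shows "0 \<le> Q k (x k) (ov k) (a k) (\<omega> ov k)"
proof -
  have "\<omega> ov \<in> PiE {..<N} In" using \<omega> assms(5) by blast
  then show ?thesis using Q assms(3-6) unfolding local_interventions_def by (simp add: PiE_mem)
qed

lemma cond_distr_compose_process_function:
  assumes pf: "process_function N In Out \<omega>" and In: "\<forall>k<N. finite (In k)"
    and X: "\<forall>k<N. finite (X k)" and Q: "local_interventions N A X In Out Q"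
  shows "cond_distr N A X (compose N In Out Q (delta_fun \<omega>))"
  unfolding cond_distr_def
proof (intro ballI conjI)
  fix a assume a: "a \<in> PiE {..<N} A"
  have \<omega>: "\<omega> \<in> PiE {..<N} Out \<rightarrow> PiE {..<N} In" using pf unfolding process_function_def by blast
  have Q_a: "(\<forall>x\<in>X k. \<forall>ov\<in>Out k. 0 \<le> Q k x ov (a k) i) \<and> (\<Sum>x\<in>X k. \<Sum>ov\<in>Out k. Q k x ov (a k) i) = 1"
    if "k < N" "i \<in> In k" for k i
    using Q that PiE_mem[OF a, of k] unfolding local_interventions_def by simp
  show "0 \<le> compose N In Out Q (delta_fun \<omega>) x a" if "x \<in> PiE {..<N} X" for x
    unfolding compose_delta_fun[OF \<omega> In]
    using local_interventions_factor_nonneg[OF Q \<omega> a that] by (auto intro!: sum_nonneg prod_nonneg)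
  text \<open>Summing out the outcomes leaves a local intervention with trivial outcome set.\<close>
  define R where "R k ov i = (\<Sum>y\<in>X k. Q k y ov (a k) i)" for k ov i
  have R: "\<forall>k<N. \<forall>i\<in>In k. (\<forall>ov\<in>Out k. 0 \<le> R k ov i) \<and> (\<Sum>ov\<in>Out k. R k ov i) = 1"
  proof (intro allI impI ballI conjI)
    fix k i assume k: "k < N" "i \<in> In k"
    show "0 \<le> R k ov i" if "ov \<in> Out k" for ov
      unfolding R_def using Q_a[OF k] that by (simp add: sum_nonneg)
    have "(\<Sum>ov\<in>Out k. R k ov i) = (\<Sum>x\<in>X k. \<Sum>ov\<in>Out k. Q k x ov (a k) i)"
      unfolding R_def by (rule sum.swap)
    then show "(\<Sum>ov\<in>Out k. R k ov i) = 1" using Q_a[OF k] by simp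
  qed
  have "(\<Sum>x\<in>PiE {..<N} X. compose N In Out Q (delta_fun \<omega>) x a) =
      (\<Sum>ov\<in>PiE {..<N} Out. \<Sum>x\<in>PiE {..<N} X. \<Prod>k<N. Q k (x k) (ov k) (a k) (\<omega> ov k))"
    unfolding compose_delta_fun[OF \<omega> In] by (rule sum.swap)
  also have "\<dots> = (\<Sum>ov\<in>PiE {..<N} Out. \<Prod>k<N. R k (ov k) (\<omega> ov k))"
    unfolding R_def by (intro sum.cong refl) (subst prod_sum_PiE; use X in auto)
  also have "\<dots> = 1" by (rule process_function_prod_sum_eq_1[OF pf In R])
  finally show "(\<Sum>x\<in>PiE {..<N} X. compose N In Out Q (delta_fun \<omega>) x a) = 1" .
qed

lemma sum_pos_ex_pos: "0 < (\<Sum>x\<in>S. g x :: real) \<Longrightarrow> \<exists>x\<in>S. 0 < g x"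
  by (metis not_le sum_nonpos)

lemma det_corr_PiE:
  "x \<in> PiE {..<N} X \<Longrightarrow> det_corr N f x a = (if x = restrict (\<lambda>k. f k a) {..<N} then 1 else 0)"
  unfolding det_corr_def by (auto simp: PiE_def extensional_def)

lemma det_corr_convex_component:
  fixes n :: nat
  assumes X: "\<forall>k<N. finite (X k)" and f_in: "\<forall>k<N. \<forall>a\<in>PiE {..<N} A. f k a \<in> X k"
    and p: "\<And>i. i < n \<Longrightarrow> cond_distr N A X (p i)"
    and c: "\<And>i. i < n \<Longrightarrow> 0 \<le> c i" and c_sum: "(\<Sum>i<n. c i) = 1"
    and decomp: "\<And>a x. a \<in> PiE {..<N} A \<Longrightarrow> x \<in> PiE {..<N} X \<Longrightarrow>
        det_corr N f x a = (\<Sum>i<n. c i * p i x a)"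
    and j: "j < n" "0 < c j"
    and a: "a \<in> PiE {..<N} A" and x: "x \<in> PiE {..<N} X"
  shows "p j x a = det_corr N f x a"
proof -
  define y where "y = restrict (\<lambda>k. f k a) {..<N}"
  have y: "y \<in> PiE {..<N} X" unfolding y_def using f_in a by simp
  have fin: "finite (PiE {..<N} X)" using X by (intro finite_PiE) auto
  have nonneg: "0 \<le> p i x' a" and sum_1: "(\<Sum>x'\<in>PiE {..<N} X. p i x' a) = 1"
    if "i < n" "x' \<in> PiE {..<N} X" for i x'
    using p[OF that(1)] a that(2) unfolding cond_distr_def by blast+
  have "p i y a \<le> 1" if "i < n" for i
    using member_le_sum[OF y, of "\<lambda>x'. p i x' a"] nonneg[OF that] sum_1[OF that y] fin by simp
  then have "\<forall>i\<in>{..<n}. 0 \<le> c i * (1 - p i y a)" using c by simp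
  moreover have "(\<Sum>i<n. c i * (1 - p i y a)) = 0"
    using decomp[OF a y] c_sum unfolding y_def det_corr_def
    by (simp add: right_diff_distrib sum_subtractf)
  ultimately have "c j * (1 - p j y a) = 0" using j(1) by (subst (asm) sum_nonneg_eq_0_iff) auto
  then have py: "p j y a = 1" using j(2) by simp
  have "(\<Sum>x'\<in>PiE {..<N} X - {y}. p j x' a) = 0"
    using sum_1[OF j(1) y] sum.remove[OF fin y, of "\<lambda>x'. p j x' a"] py by simp
  then have "p j x' a = 0" if "x' \<in> PiE {..<N} X" "x' \<noteq> y" for x'
    using that nonneg[OF j(1)] fin by (subst (asm) sum_nonneg_eq_0_iff) auto
  then show ?thesis using py x unfolding det_corr_PiE[OF x] y_def[symmetric] by auto
qed

section \<open>Response functions and the signalling graph\<close>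

definition response ::
  "(nat \<Rightarrow> 'a set) \<Rightarrow> (nat \<Rightarrow> (nat \<Rightarrow> 'a) \<Rightarrow> 'x) \<Rightarrow> nat \<Rightarrow> (nat \<Rightarrow> 'a) \<Rightarrow> 'a \<Rightarrow> 'x" where
  "response A f l a = restrict (\<lambda>\<beta>. f l (a(l := \<beta>))) (A l)"

lemma fun_upd_in_PiE: "a \<in> PiE S T \<Longrightarrow> k \<in> S \<Longrightarrow> y \<in> T k \<Longrightarrow> a(k := y) \<in> PiE S T"
  by (auto simp: PiE_def extensional_def Pi_def)

lemma no_signalling_eq:
  assumes a: "a \<in> PiE {..<N} A" and a': "a' \<in> PiE {..<N} A" and l: "l < N"
    and quiet: "\<And>k. k < N \<Longrightarrow> a k \<noteq> a' k \<Longrightarrow> k \<noteq> l \<and> \<not> signals N A f k l"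
  shows "f l a = f l a'"
proof -
  have induct: "f l b = f l a'"
    if "finite D" "D \<subseteq> {k. k < N \<and> k \<noteq> l \<and> \<not> signals N A f k l}"
      and "b \<in> PiE {..<N} A" "{k. b k \<noteq> a' k} \<subseteq> D" for D b
    using that
  proof (induction D arbitrary: b rule: finite_induct)
    case empty
    then have "b = a'" by (auto intro: ext)
    then show ?case by simp
  next
    case (insert k D)
    define b' where "b' = b(k := a' k)"
    have k: "k < N" "k \<noteq> l" "\<not> signals N A f k l" using insert.prems(1) by auto
    have b': "b' \<in> PiE {..<N} A"
      unfolding b'_def using insert.prems(2) a' k(1) by (intro fun_upd_in_PiE) auto
    have "{j. b' j \<noteq> a' j} \<subseteq> D" using insert.prems(3) unfolding b'_def by auto
    then have "f l b' = f l a'" using insert.IH[OF _ b'] insert.prems(1) by blast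
    moreover have "f l b = f l b'"
    proof (rule ccontr)
      assume "f l b \<noteq> f l b'"
      moreover have "\<forall>j. j \<noteq> k \<longrightarrow> b j = b' j" unfolding b'_def by simp
      ultimately have "signals N A f k l"
        unfolding signals_def using k(1,2) l insert.prems(2) b' by blast
      then show False using k(3) by contradiction
    qed
    ultimately show ?case by simp
  qed
  have differ: "{k. a k \<noteq> a' k} \<subseteq> {k. k < N \<and> a k \<noteq> a' k}"
    using PiE_arb[OF a] PiE_arb[OF a'] by force
  have "{k. k < N \<and> a k \<noteq> a' k} \<subseteq> {k. k < N \<and> k \<noteq> l \<and> \<not> signals N A f k l}"
    using quiet by blast
  then show ?thesis using induct[OF _ _ a differ] by simp
qed

lemma response_eq:
  assumes "a \<in> PiE {..<N} A" "a' \<in> PiE {..<N} A" "l < N"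
    and "\<And>k. k < N \<Longrightarrow> k \<noteq> l \<Longrightarrow> a k \<noteq> a' k \<Longrightarrow> \<not> signals N A f k l"
  shows "response A f l a = response A f l a'"
  unfolding response_def
proof (rule restrict_ext)
  fix \<beta> assume "\<beta> \<in> A l"
  then have "a(l := \<beta>) \<in> PiE {..<N} A" "a'(l := \<beta>) \<in> PiE {..<N} A"
    using assms(1-3) by (simp_all add: fun_upd_in_PiE)
  then show "f l (a(l := \<beta>)) = f l (a'(l := \<beta>))"
    by (rule no_signalling_eq[OF _ _ assms(3)]) (auto split: if_splits simp: assms(4))
qed

section \<open>Sibling-free cycles admit a grandfather paradox\<close>

locale sibling_free_cycle =
  fixes N :: nat and E :: "nat \<Rightarrow> nat \<Rightarrow> bool" and vs :: "nat list"
  assumes cycle: "directed_cycle N E vs"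
    and no_siblings: "\<And>s s' u. s \<in> set vs \<Longrightarrow> s' \<in> set vs \<Longrightarrow> u < N \<Longrightarrow> E u s \<Longrightarrow> E u s' \<Longrightarrow> s = s'"
begin

definition succ_idx :: "nat \<Rightarrow> nat" where
  "succ_idx j = Suc j mod length vs"

definition pred_idx :: "nat \<Rightarrow> nat" where
  "pred_idx m = (if m = 0 then length vs - 1 else m - 1)"

lemma length_ge_2: "2 \<le> length vs"
  using cycle unfolding directed_cycle_def by blast

lemma nth_lt_N: "j < length vs \<Longrightarrow> vs ! j < N"
  using cycle nth_mem unfolding directed_cycle_def by blast

lemma nth_eq_iff: "j < length vs \<Longrightarrow> j' < length vs \<Longrightarrow> vs ! j = vs ! j' \<longleftrightarrow> j = j'"
  using cycle nth_eq_iff_index_eq unfolding directed_cycle_def by blast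

lemma length_pos: "0 < length vs"
  using length_ge_2 by linarith

lemma succ_idx_lt: "succ_idx j < length vs"
  using length_pos unfolding succ_idx_def by simp

lemma succ_idx_eq: "j < length vs \<Longrightarrow> succ_idx j = (if Suc j = length vs then 0 else Suc j)"
  unfolding succ_idx_def by auto

lemma pred_idx_lt: "m < length vs \<Longrightarrow> pred_idx m < length vs"
  using length_ge_2 unfolding pred_idx_def by auto

lemma pred_idx_neq: "m < length vs \<Longrightarrow> pred_idx m \<noteq> m"
  using length_ge_2 unfolding pred_idx_def by auto

lemma succ_pred_idx: "m < length vs \<Longrightarrow> succ_idx (pred_idx m) = m"
  using length_ge_2 unfolding succ_idx_def pred_idx_def by (auto simp: Suc_diff_Suc)

lemma succ_idx_inj: "j < length vs \<Longrightarrow> j' < length vs \<Longrightarrow> succ_idx j = succ_idx j' \<Longrightarrow> j = j'"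
  by (auto simp: succ_idx_eq split: if_splits)

lemma edge: "j < length vs \<Longrightarrow> E (vs ! j) (vs ! succ_idx j)"
proof (cases "Suc j < length vs")
  case True
  then show ?thesis using cycle unfolding directed_cycle_def succ_idx_def by simp
next
  case False
  moreover assume "j < length vs"
  ultimately have "j = length vs - 1" "succ_idx j = 0" by (auto simp: succ_idx_eq)
  moreover have "vs \<noteq> []" using length_ge_2 by auto
  ultimately show ?thesis using cycle unfolding directed_cycle_def by (simp add: last_conv_nth hd_conv_nth)
qed

lemma unique_child_on_cycle:
  assumes "u < N" "j < length vs" "j' < length vs"
    and "E u (vs ! succ_idx j)" "E u (vs ! succ_idx j')"
  shows "j = j'"
proof -
  have "vs ! succ_idx j = vs ! succ_idx j'"
    using no_siblings[OF nth_mem nth_mem assms(1,4,5)] succ_idx_lt by blast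
  then show ?thesis using nth_eq_iff succ_idx_lt succ_idx_inj assms(2,3) by blast
qed

lemma parent_on_cycle:
  assumes "m < length vs" "m' < length vs" "E (vs ! m') (vs ! m)"
  shows "m' = pred_idx m"
  using unique_child_on_cycle[OF nth_lt_N[OF assms(2)] assms(2) pred_idx_lt[OF assms(1)]]
    edge[OF assms(2)] assms(3) succ_pred_idx[OF assms(1)] by simp

end

lemma not_siblings_on_cycles_obtain_cycle:
  assumes "\<not> siblings_on_cycles N E"
  obtains vs where "sibling_free_cycle N E vs"
  using assms unfolding siblings_on_cycles_def sibling_free_cycle_def by blast

locale cycle_witnesses = sibling_free_cycle N "signals N A f" vs
  for N :: nat and A :: "nat \<Rightarrow> 'a set" and f :: "nat \<Rightarrow> (nat \<Rightarrow> 'a) \<Rightarrow> 'x" and vs +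
  fixes W W' :: "nat \<Rightarrow> nat \<Rightarrow> 'a"
  assumes W_in: "j < length vs \<Longrightarrow> W j \<in> PiE {..<N} A"
    and W'_in: "j < length vs \<Longrightarrow> W' j \<in> PiE {..<N} A"
    and W_W'_agree: "j < length vs \<Longrightarrow> i \<noteq> vs ! j \<Longrightarrow> W j i = W' j i"
    and W_W'_differ: "j < length vs \<Longrightarrow> f (vs ! succ_idx j) (W j) \<noteq> f (vs ! succ_idx j) (W' j)"
begin

definition \<alpha> :: "nat \<Rightarrow> 'a" where "\<alpha> j = W j (vs ! j)"
definition \<alpha>' :: "nat \<Rightarrow> 'a" where "\<alpha>' j = W' j (vs ! j)"

lemma \<alpha>_in: "j < length vs \<Longrightarrow> \<alpha> j \<in> A (vs ! j)"
  unfolding \<alpha>_def using W_in nth_lt_N by (blast intro: PiE_mem)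

lemma \<alpha>'_in: "j < length vs \<Longrightarrow> \<alpha>' j \<in> A (vs ! j)"
  unfolding \<alpha>'_def using W'_in nth_lt_N by (blast intro: PiE_mem)

lemma \<alpha>_neq_\<alpha>': "j < length vs \<Longrightarrow> \<alpha> j \<noteq> \<alpha>' j"
proof
  assume j: "j < length vs" and "\<alpha> j = \<alpha>' j"
  then have "W j i = W' j i" for i
    using W_W'_agree[OF j] unfolding \<alpha>_def \<alpha>'_def by (cases "i = vs ! j") auto
  then have "W j = W' j" by (rule ext)
  then show False using W_W'_differ[OF j] by simp
qed

definition target :: "nat \<Rightarrow> 'a \<Rightarrow> 'x" where
  "target m = response A f (vs ! m) (W (pred_idx m))"

definition feeds :: "nat \<Rightarrow> nat \<Rightarrow> bool" where
  "feeds u j \<longleftrightarrow> j < length vs \<and> signals N A f u (vs ! succ_idx j)"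

definition source_idx :: "nat \<Rightarrow> nat" where
  "source_idx u = (if \<exists>j. feeds u j then SOME j. feeds u j else 0)"

lemma source_idx_lt: "source_idx u < length vs"
proof (cases "\<exists>j. feeds u j")
  case True
  then show ?thesis unfolding source_idx_def by (metis someI_ex feeds_def)
next
  case False
  then show ?thesis using length_ge_2 unfolding source_idx_def by auto
qed

lemma source_idx_eq: "u < N \<Longrightarrow> feeds u j \<Longrightarrow> source_idx u = j"
  unfolding source_idx_def by (metis feeds_def someI_ex unique_child_on_cycle)

definition off_cycle_setting :: "nat \<Rightarrow> 'a" where
  "off_cycle_setting u = W (source_idx u) u"

lemma off_cycle_setting_in: "u < N \<Longrightarrow> off_cycle_setting u \<in> A u"
  unfolding off_cycle_setting_def using W_in[OF source_idx_lt] by (blast intro: PiE_mem)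

text \<open>Vertex vs ! m plays \<alpha> m exactly when it observes the response target m, i.e. when
  its predecessor played \<alpha>; vertex vs ! 0 does the opposite. Parties off the cycle play witness
  settings, which leave these responses undisturbed.\<close>
definition paradox_choice :: "nat \<Rightarrow> ('a \<Rightarrow> 'x) \<Rightarrow> 'a" where
  "paradox_choice k r =
     (if k \<in> set vs then
        let m = the_inv_into {..<length vs} ((!) vs) k
        in if (r = target m) = (m \<noteq> 0) then \<alpha> m else \<alpha>' m
      else off_cycle_setting k)"

lemma paradox_choice_nth:
  assumes m: "m < length vs"
  shows "paradox_choice (vs ! m) r = (if (r = target m) = (m \<noteq> 0) then \<alpha> m else \<alpha>' m)"
proof -
  have "inj_on ((!) vs) {..<length vs}" using nth_eq_iff by (auto intro: inj_onI)
  then have "the_inv_into {..<length vs} ((!) vs) (vs ! m) = m" using m by (simp add: the_inv_into_f_f)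
  then show ?thesis using m unfolding paradox_choice_def by simp
qed

lemma paradox_choice_in: "k < N \<Longrightarrow> paradox_choice k r \<in> A k"
proof (cases "k \<in> set vs")
  case True
  then obtain m where "m < length vs" "k = vs ! m" by (auto simp: in_set_conv_nth)
  then show ?thesis using paradox_choice_nth \<alpha>_in \<alpha>'_in by simp
next
  case False
  moreover assume "k < N"
  ultimately show ?thesis using off_cycle_setting_in unfolding paradox_choice_def by simp
qed

lemma response_eq_if_agree_on_parents:
  assumes m: "m < length vs" and a: "a \<in> PiE {..<N} A" and w: "w \<in> PiE {..<N} A"
    and pred: "a (vs ! pred_idx m) = w (vs ! pred_idx m)"
    and off: "\<And>k. k < N \<Longrightarrow> k \<notin> set vs \<Longrightarrow> a k = off_cycle_setting k"
    and w_off: "\<And>k. k < N \<Longrightarrow> k \<notin> set vs \<Longrightarrow> signals N A f k (vs ! m) \<Longrightarrow> w k = W (pred_idx m) k"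
  shows "response A f (vs ! m) a = response A f (vs ! m) w"
proof (rule response_eq[OF a w nth_lt_N[OF m]])
  fix k assume k: "k < N" "k \<noteq> vs ! m" "a k \<noteq> w k"
  show "\<not> signals N A f k (vs ! m)"
  proof
    assume sig: "signals N A f k (vs ! m)"
    show False
    proof (cases "k \<in> set vs")
      case True
      then obtain m' where "m' < length vs" "k = vs ! m'" by (auto simp: in_set_conv_nth)
      then show False using parent_on_cycle[OF m] sig pred k(3) by blast
    next
      case False
      have "feeds k (pred_idx m)"
        unfolding feeds_def using sig pred_idx_lt[OF m] succ_pred_idx[OF m] by simp
      then have "a k = W (pred_idx m) k"
        using off[OF k(1) False] source_idx_eq[OF k(1)] unfolding off_cycle_setting_def by simp
      then show False using w_off[OF k(1) False sig] k(3) by simp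
    qed
  qed
qed

lemma response_W'_neq_target: "m < length vs \<Longrightarrow> response A f (vs ! m) (W' (pred_idx m)) \<noteq> target m"
proof
  assume m: "m < length vs" and eq: "response A f (vs ! m) (W' (pred_idx m)) = target m"
  let ?p = "pred_idx m" and ?\<beta> = "W (pred_idx m) (vs ! m)"
  have p: "?p < length vs" using pred_idx_lt[OF m] .
  have \<beta>: "?\<beta> \<in> A (vs ! m)" using W_in[OF p] nth_lt_N[OF m] by (blast intro: PiE_mem)
  have "vs ! m \<noteq> vs ! ?p" using nth_eq_iff[OF m p] pred_idx_neq[OF m] by simp
  then have "W' ?p (vs ! m) = ?\<beta>" using W_W'_agree[OF p] by simp
  then have "(W' ?p)(vs ! m := ?\<beta>) = W' ?p" by (metis fun_upd_triv)
  then have "f (vs ! m) (W' ?p) = f (vs ! m) (W ?p)"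
    using fun_cong[OF eq, of ?\<beta>] \<beta> unfolding target_def response_def by simp
  then show False using W_W'_differ[OF p] succ_pred_idx[OF m] by simp
qed

lemma response_at_cycle_vertex:
  assumes m: "m < length vs" and a: "a \<in> PiE {..<N} A"
    and off: "\<And>k. k < N \<Longrightarrow> k \<notin> set vs \<Longrightarrow> a k = off_cycle_setting k"
    and two_valued: "a (vs ! pred_idx m) \<in> {\<alpha> (pred_idx m), \<alpha>' (pred_idx m)}"
  shows "response A f (vs ! m) a = target m \<longleftrightarrow> a (vs ! pred_idx m) = \<alpha> (pred_idx m)"
proof (cases "a (vs ! pred_idx m) = \<alpha> (pred_idx m)")
  case True
  have "response A f (vs ! m) a = target m"
    unfolding target_def using True W_in[OF pred_idx_lt[OF m]]
    by (intro response_eq_if_agree_on_parents[OF m a _ _ off]) (simp_all add: \<alpha>_def)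
  then show ?thesis using True by simp
next
  case False
  have "response A f (vs ! m) a = response A f (vs ! m) (W' (pred_idx m))"
  proof (rule response_eq_if_agree_on_parents[OF m a W'_in[OF pred_idx_lt[OF m]] _ off])
    show "a (vs ! pred_idx m) = W' (pred_idx m) (vs ! pred_idx m)"
      using False two_valued unfolding \<alpha>'_def by simp
    fix k assume "k \<notin> set vs"
    then show "W' (pred_idx m) k = W (pred_idx m) k"
      using W_W'_agree[OF pred_idx_lt[OF m]] nth_mem[OF pred_idx_lt[OF m]] by metis
  qed
  then show ?thesis using False response_W'_neq_target[OF m] by simp
qed

theorem paradox_choice_inconsistent:
  assumes a: "a \<in> PiE {..<N} A"
    and consistent: "\<And>k. k < N \<Longrightarrow> a k = paradox_choice k (response A f k a)"
  shows False
proof -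
  have off: "a k = off_cycle_setting k" if "k < N" "k \<notin> set vs" for k
    using consistent that unfolding paradox_choice_def by simp
  have on_cycle: "a (vs ! m) = (if (response A f (vs ! m) a = target m) = (m \<noteq> 0) then \<alpha> m else \<alpha>' m)"
    if "m < length vs" for m
    using consistent[OF nth_lt_N[OF that]] paradox_choice_nth[OF that] by simp
  define e where "e m \<longleftrightarrow> a (vs ! m) = \<alpha>' m" for m
  have step: "e m \<longleftrightarrow> (if m = 0 then \<not> e (pred_idx m) else e (pred_idx m))" if m: "m < length vs" for m
  proof -
    have p: "pred_idx m < length vs" using pred_idx_lt[OF m] .
    have "a (vs ! pred_idx m) \<in> {\<alpha> (pred_idx m), \<alpha>' (pred_idx m)}"
      using on_cycle[OF p] by simp
    then have "response A f (vs ! m) a = target m \<longleftrightarrow> \<not> e (pred_idx m)"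
      using response_at_cycle_vertex[OF m a off] \<alpha>_neq_\<alpha>'[OF p] unfolding e_def by auto
    then show ?thesis using on_cycle[OF m] \<alpha>_neq_\<alpha>'[OF m] unfolding e_def by auto
  qed
  have "e m = e 0" if "m < length vs" for m
    using that
  proof (induction m)
    case (Suc m)
    then show ?case using step[OF Suc.prems] by (simp add: pred_idx_def)
  qed simp
  moreover have "e 0 \<longleftrightarrow> \<not> e (length vs - 1)"
    using step[OF length_pos] by (simp add: pred_idx_def)
  ultimately show False using length_pos by (metis diff_less zero_less_one)
qed

end

theorem siblings_on_cycles_if_adaptive_settings_consistent:
  assumes consistent: "\<And>\<Gamma>. (\<And>k r. k < N \<Longrightarrow> \<Gamma> k r \<in> A k) \<Longrightarrow>
      \<exists>a\<in>PiE {..<N} A. \<forall>k<N. a k = \<Gamma> k (response A f k a)"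
  shows "siblings_on_cycles N (signals N A f)"
proof (rule ccontr)
  assume "\<not> siblings_on_cycles N (signals N A f)"
  then obtain vs where cycle: "sibling_free_cycle N (signals N A f) vs"
    by (rule not_siblings_on_cycles_obtain_cycle)
  interpret sibling_free_cycle N "signals N A f" vs by (fact cycle)
  have "\<forall>j<length vs. \<exists>w w'. w \<in> PiE {..<N} A \<and> w' \<in> PiE {..<N} A \<and>
      (\<forall>i. i \<noteq> vs ! j \<longrightarrow> w i = w' i) \<and> f (vs ! succ_idx j) w \<noteq> f (vs ! succ_idx j) w'"
    using edge unfolding signals_def by blast
  then obtain W W' where "\<forall>j<length vs. W j \<in> PiE {..<N} A \<and> W' j \<in> PiE {..<N} A \<and>
      (\<forall>i. i \<noteq> vs ! j \<longrightarrow> W j i = W' j i) \<and> f (vs ! succ_idx j) (W j) \<noteq> f (vs ! succ_idx j) (W' j)"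
    by metis
  then interpret cycle_witnesses N A f vs W W' by unfold_locales auto
  obtain a where "a \<in> PiE {..<N} A" "\<And>k. k < N \<Longrightarrow> a k = paradox_choice k (response A f k a)"
    using consistent[of paradox_choice] paradox_choice_in by blast
  then show False by (rule paradox_choice_inconsistent)
qed

section \<open>Deterministic realisations\<close>

text \<open>Party k with setting \<beta> and input i outputs s k \<beta> i and records the outcome t k \<beta> i;
  together with \<omega> this reproduces the correlation f.\<close>
locale deterministic_realisation = unique_fixpoint_map N In Out \<omega> for N In Out \<omega> +
  fixes A :: "nat \<Rightarrow> 'a set" and f :: "nat \<Rightarrow> (nat \<Rightarrow> 'a) \<Rightarrow> 'x"
    and s :: "nat \<Rightarrow> 'a \<Rightarrow> nat \<Rightarrow> nat" and t :: "nat \<Rightarrow> 'a \<Rightarrow> nat \<Rightarrow> 'x"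
  assumes s_in_Out: "\<And>k \<beta> i. k < N \<Longrightarrow> \<beta> \<in> A k \<Longrightarrow> i \<in> In k \<Longrightarrow> s k \<beta> i \<in> Out k"
    and t_realises_f: "\<And>a z k. a \<in> PiE {..<N} A \<Longrightarrow> fixpoint (\<lambda>k. s k (a k)) z \<Longrightarrow> k < N \<Longrightarrow>
        t k (a k) (\<omega> z k) = f k a"
begin

lemma strategy_of_settings: "a \<in> PiE {..<N} A \<Longrightarrow> strategy (\<lambda>k. s k (a k))"
  unfolding strategy_def using s_in_Out by (blast intro: PiE_mem)

text \<open>Since the input of party l does not depend on its own setting, the outcomes it would
  record for the various settings reveal its whole response function.\<close>
lemma input_reveals_response:
  assumes a: "a \<in> PiE {..<N} A" and z: "fixpoint (\<lambda>k. s k (a k)) z" and l: "l < N"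
  shows "restrict (\<lambda>\<beta>. t l \<beta> (\<omega> z l)) (A l) = response A f l a"
  unfolding response_def
proof (rule restrict_ext)
  fix \<beta> assume \<beta>: "\<beta> \<in> A l"
  let ?a = "a(l := \<beta>)"
  have a': "?a \<in> PiE {..<N} A" using a l \<beta> by (simp add: fun_upd_in_PiE)
  obtain z' where z': "fixpoint (\<lambda>k. s k (?a k)) z'"
    using fixpoint_exists[OF strategy_of_settings[OF a']] by blast
  have "\<omega> z l = \<omega> z' l"
    by (rule input_independent_of_own_strategy[OF l strategy_of_settings[OF a]
          strategy_of_settings[OF a'] _ z z']) simp
  moreover have "t l \<beta> (\<omega> z' l) = f l ?a"
    using t_realises_f[OF a' z' l] by (simp only: fun_upd_same)
  ultimately show "t l \<beta> (\<omega> z l) = f l ?a" by simp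
qed

lemma adaptive_settings_consistent:
  assumes \<Gamma>: "\<And>k r. k < N \<Longrightarrow> \<Gamma> k r \<in> A k"
  shows "\<exists>a\<in>PiE {..<N} A. \<forall>k<N. a k = \<Gamma> k (response A f k a)"
proof -
  define G where "G k i = \<Gamma> k (restrict (\<lambda>\<beta>. t k \<beta> i) (A k))" for k i
  have "strategy (\<lambda>k i. s k (G k i) i)"
    unfolding strategy_def G_def using s_in_Out \<Gamma> by blast
  then obtain z where z: "fixpoint (\<lambda>k i. s k (G k i) i) z" using fixpoint_exists by blast
  define a where "a = restrict (\<lambda>k. G k (\<omega> z k)) {..<N}"
  have a: "a \<in> PiE {..<N} A" unfolding a_def G_def using \<Gamma> by simp
  have "fixpoint (\<lambda>k. s k (a k)) z" using z unfolding fixpoint_def a_def by simp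
  then have "a k = \<Gamma> k (response A f k a)" if "k < N" for k
    using input_reveals_response[OF a _ that] that unfolding a_def G_def by simp
  then show ?thesis using a by blast
qed

lemma siblings_on_cycles: "siblings_on_cycles N (signals N A f)"
  by (rule siblings_on_cycles_if_adaptive_settings_consistent) (rule adaptive_settings_consistent)

end

lemma prod_le_compose_delta_fun:
  assumes Q: "local_interventions N A X In Out Q" and \<omega>: "\<omega> \<in> PiE {..<N} Out \<rightarrow> PiE {..<N} In"
    and In: "\<forall>k<N. finite (In k)" and Out: "\<forall>k<N. finite (Out k)"
    and a: "a \<in> PiE {..<N} A" and x: "x \<in> PiE {..<N} X" and z: "z \<in> PiE {..<N} Out"
  shows "(\<Prod>k<N. Q k (x k) (z k) (a k) (\<omega> z k)) \<le> compose N In Out Q (delta_fun \<omega>) x a"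
  unfolding compose_delta_fun[OF \<omega> In]
proof (rule member_le_sum[OF z])
  fix ov assume "ov \<in> PiE {..<N} Out - {z}"
  then show "0 \<le> (\<Prod>k<N. Q k (x k) (ov k) (a k) (\<omega> ov k))"
    using local_interventions_factor_nonneg[OF Q \<omega> a x] by (auto intro!: prod_nonneg)
qed (use Out in \<open>auto intro: finite_PiE\<close>)

lemma local_interventions_ex_pos:
  assumes "local_interventions N A X In Out Q" "k < N" "\<beta> \<in> A k" "i \<in> In k"
  shows "\<exists>x\<in>X k. \<exists>ov\<in>Out k. 0 < Q k x ov \<beta> i"
proof -
  have "(\<Sum>x\<in>X k. \<Sum>ov\<in>Out k. Q k x ov \<beta> i) = 1"
    using assms unfolding local_interventions_def by blast
  then have "\<exists>x\<in>X k. 0 < (\<Sum>ov\<in>Out k. Q k x ov \<beta> i)" by (intro sum_pos_ex_pos) simp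
  then show ?thesis by (meson sum_pos_ex_pos)
qed

lemma deterministic_realisation_exists:
  assumes pf: "process_function N In Out \<omega>"
    and In: "\<forall>k<N. finite (In k)" and Out: "\<forall>k<N. finite (Out k)"
    and Q: "local_interventions N A X In Out Q"
    and det: "\<And>a x. a \<in> PiE {..<N} A \<Longrightarrow> x \<in> PiE {..<N} X \<Longrightarrow>
        compose N In Out Q (delta_fun \<omega>) x a = det_corr N f x a"
  obtains s t where "deterministic_realisation N In Out \<omega> A f s t"
proof -
  interpret unique_fixpoint_map N In Out \<omega>
    by (rule process_function_unique_fixpoint_map[OF pf In Out])
  text \<open>Each party picks, for every setting and input, one outcome--output pair of positive
    probability; the correlation being deterministic, any such choice reproduces f.\<close>
  obtain t s where st: "\<And>k \<beta> i. k < N \<Longrightarrow> \<beta> \<in> A k \<Longrightarrow> i \<in> In k \<Longrightarrow>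
      t k \<beta> i \<in> X k \<and> s k \<beta> i \<in> Out k \<and> 0 < Q k (t k \<beta> i) (s k \<beta> i) \<beta> i"
    using local_interventions_ex_pos[OF Q] by metis
  have "deterministic_realisation N In Out \<omega> A f s t"
  proof (unfold_locales)
    show "s k \<beta> i \<in> Out k" if "k < N" "\<beta> \<in> A k" "i \<in> In k" for k \<beta> i
      using st[OF that] by blast
  next
    fix a z k
    assume a: "a \<in> PiE {..<N} A" and z: "fixpoint (\<lambda>k. s k (a k)) z" and k: "k < N"
    define x where "x = restrict (\<lambda>k. t k (a k) (\<omega> z k)) {..<N}"
    have z_Out: "z \<in> PiE {..<N} Out" using z unfolding fixpoint_def by blast
    have st_z: "t l (a l) (\<omega> z l) \<in> X l \<and> 0 < Q l (x l) (z l) (a l) (\<omega> z l)" if "l < N" for l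
      using st[OF that PiE_mem[OF a] \<omega>_in_In[OF z_Out that]] z that
      unfolding fixpoint_def x_def by auto
    have x: "x \<in> PiE {..<N} X" unfolding x_def using st_z by simp
    have "0 < (\<Prod>l<N. Q l (x l) (z l) (a l) (\<omega> z l))"
      by (intro prod_pos) (use st_z in blast)
    also have "\<dots> \<le> compose N In Out Q (delta_fun \<omega>) x a"
      by (rule prod_le_compose_delta_fun[OF Q \<omega>_maps In Out a x z_Out])
    finally have "det_corr N f x a \<noteq> 0" using det[OF a x] by simp
    then show "t k (a k) (\<omega> z k) = f k a" using k unfolding det_corr_def x_def by (simp split: if_splits)
  qed
  then show thesis by (rule that)
qed

lemma det_consistent_det_corr_obtains_realisation:
  assumes X: "\<forall>k<N. finite (X k)" and f_in: "\<forall>k<N. \<forall>a\<in>PiE {..<N} A. f k a \<in> X k"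
    and "det_consistent N A X (det_corr N f)"
  obtains In Out \<omega> s t where "deterministic_realisation N In Out \<omega> A f s t"
proof -
  obtain In Out Q w where fin: "\<forall>k<N. finite (In k) \<and> finite (Out k)"
    and Q: "local_interventions N A X In Out Q" and w: "det_extrema_polytope N In Out w"
    and eq: "\<forall>a\<in>PiE {..<N} A. \<forall>x\<in>PiE {..<N} X. det_corr N f x a = compose N In Out Q w x a"
    using assms(3) unfolding det_consistent_def by blast
  from w obtain n :: nat and c \<Omega> where c: "\<forall>j<n. 0 \<le> c j \<and> process_function N In Out (\<Omega> j)"
    and c_sum: "(\<Sum>j<n. c j) = 1"
    and w_eq: "\<forall>i\<in>PiE {..<N} In. \<forall>ov\<in>PiE {..<N} Out. w i ov = (\<Sum>j<n. c j * delta_fun (\<Omega> j) i ov)"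
    unfolding det_extrema_polytope_def by blast
  obtain j where j: "j < n" "0 < c j" using sum_pos_ex_pos[of c "{..<n}"] c_sum by auto
  have cond_distr: "cond_distr N A X (compose N In Out Q (delta_fun (\<Omega> i)))" if "i < n" for i
    using c that fin X Q by (intro cond_distr_compose_process_function) auto
  have decomp: "det_corr N f x a = (\<Sum>i<n. c i * compose N In Out Q (delta_fun (\<Omega> i)) x a)"
    if "a \<in> PiE {..<N} A" "x \<in> PiE {..<N} X" for a x
    using eq that compose_convex_combination[OF w_eq] by simp
  have "compose N In Out Q (delta_fun (\<Omega> j)) x a = det_corr N f x a"
    if "a \<in> PiE {..<N} A" "x \<in> PiE {..<N} X" for a x
    using det_corr_convex_component[OF X f_in cond_distr _ c_sum decomp j that] c by auto
  then show thesis using deterministic_realisation_exists c j fin Q that by metis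
qed

theorem corollary7:
  fixes N :: nat and A :: "nat \<Rightarrow> 'a set" and X :: "nat \<Rightarrow> 'x set"
    and f :: "nat \<Rightarrow> (nat \<Rightarrow> 'a) \<Rightarrow> 'x"
  assumes "\<forall>k<N. finite (A k) \<and> A k \<noteq> {}"
    and "\<forall>k<N. finite (X k) \<and> X k \<noteq> {}"
    and "\<forall>k<N. \<forall>a\<in>PiE {..<N} A. f k a \<in> X k"
    and "\<not> siblings_on_cycles N (signals N A f)"
  shows "antinomic N A X (det_corr N f)"
  unfolding antinomic_def
proof
  assume "det_consistent N A X (det_corr N f)"
  moreover have "\<forall>k<N. finite (X k)" using assms(2) by blast
  ultimately obtain In Out \<omega> s t where "deterministic_realisation N In Out \<omega> A f s t"
    using assms(3) det_consistent_det_corr_obtains_realisation by metis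
  then show False using deterministic_realisation.siblings_on_cycles assms(4) by blast
qed

end
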